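(* Let $G=(V,E)$ be an undirected graph (finite or infinite), $\widehat A$ a color class of $G$, and $X$ a partitive set of $G$ with $X\subsetneq\widetilde A$. Then there exists $a\in\widetilde A\setminus X$ such that $(a,x)\in\widehat A$ for every $x\in X$.
   Context: A graph $G=(V,E)$ has vertex set $V$ and edge set $E\subseteq V^2$; it is undirected if $E$ is irreflexive and symmetric. A set $X\subseteq V$ is a partitive set of $G$ if for all $a,b\in X$ and $c\in V\setminus X$: $(a,c)\in E\Leftrightarrow(b,c)\in E$ and $(c,a)\in E\Leftrightarrow(c,b)\in E$. Implication classes: on $E$ define $(a,b)\Gamma(a',b')$ iff either $a=a'$ and $(b,b')\notin E$, or $b=b'$ and $(a,a')\notin E$; the classes of the transitive closure $\Gamma^*$ are the implication classes. For an implication class $A$, $A^{-1}=\{(b,a):(a,b)\in A\}$ and the color class is $\widehat A=A\cup A^{-1}$. $\widetilde A$ denotes the set of vertices spanned by $\widehat A$ (vertices $a$ with $(a,b)\in\widehat A$ for some $b$). *)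

theory Defs
  imports Main
begin

definition graph :: "'a set \<Rightarrow> ('a \<times> 'a) set \<Rightarrow> bool" where
  "graph V E \<longleftrightarrow> E \<subseteq> V \<times> V"

definition undirected_graph :: "'a set \<Rightarrow> ('a \<times> 'a) set \<Rightarrow> bool" where
  "undirected_graph V E \<longleftrightarrow> graph V E \<and> irrefl E \<and> sym E"

definition partitive :: "'a set \<Rightarrow> ('a \<times> 'a) set \<Rightarrow> 'a set \<Rightarrow> bool" where
  "partitive V E X \<longleftrightarrow> X \<subseteq> V \<and>
     (\<forall>a\<in>X. \<forall>b\<in>X. \<forall>c\<in>V - X.
        ((a, c) \<in> E \<longleftrightarrow> (b, c) \<in> E) \<and> ((c, a) \<in> E \<longleftrightarrow> (c, b) \<in> E))"

definition Gamma :: "('a \<times> 'a) set \<Rightarrow> (('a \<times> 'a) \<times> ('a \<times> 'a)) set" where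
  "Gamma E = {((a, b), (a', b')). (a, b) \<in> E \<and> (a', b') \<in> E \<and>
      ((a = a' \<and> (b, b') \<notin> E) \<or> (b = b' \<and> (a, a') \<notin> E))}"

definition implication_class :: "('a \<times> 'a) set \<Rightarrow> ('a \<times> 'a) set \<Rightarrow> bool" where
  "implication_class E A \<longleftrightarrow> (\<exists>e\<in>E. A = (Gamma E)\<^sup>* `` {e})"

definition color_class :: "('a \<times> 'a) set \<Rightarrow> ('a \<times> 'a) set" where
  "color_class A = A \<union> A\<inverse>"

definition spanned :: "('a \<times> 'a) set \<Rightarrow> 'a set" where
  "spanned A = {a. \<exists>b. (a, b) \<in> color_class A}"

end

(* An edge of the color class with both ends in the partitive set X would force the whole
   class into X, because a Gamma step (u,v) -> (u,v') with v' outside X is impossible when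
   u, v lie in X.  Hence an edge of the class at x0 in X leads to some b outside X, and b is
   adjacent to all of X.  If no vertex outside X were joined to all of X inside the color
   class, the property "every endpoint lying in X is joined to b inside the color class"
   would survive every Gamma step: a step (u,v) -> (u,v') with v outside X and v' in X
   makes u such a vertex.  As the color class is Gamma-connected up to reversal of edges,
   b then is joined to all of X, so b is the required vertex after all. *)
theory Submission
  imports Defs
begin

lemma sym_Gamma: "sym E \<Longrightarrow> sym (Gamma E)"
  unfolding sym_def Gamma_def by blast

lemma Gamma_swap:
  "sym E \<Longrightarrow> ((a, b), (a', b')) \<in> Gamma E \<Longrightarrow> ((b, a), (b', a')) \<in> Gamma E"
  unfolding sym_def Gamma_def by blast

lemma Gamma_subset: "Gamma E \<subseteq> E \<times> E"
  unfolding Gamma_def by auto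

lemma partitiveD:
  assumes "partitive V E X" "a \<in> X" "b \<in> X" "c \<in> V - X"
  shows "(a, c) \<in> E \<longleftrightarrow> (b, c) \<in> E" and "(c, a) \<in> E \<longleftrightarrow> (c, b) \<in> E"
  using assms unfolding partitive_def by blast+

lemma color_class_swap: "(a, b) \<in> color_class A \<Longrightarrow> (b, a) \<in> color_class A"
  unfolding color_class_def by blast

locale graph_implication_class =
  fixes V :: "'a set" and E A :: "('a \<times> 'a) set"
  assumes undirected: "undirected_graph V E"
    and implication_class: "implication_class E A"
begin

lemma edges_subset: "E \<subseteq> V \<times> V" and sym_edges: "sym E" and irrefl_edges: "irrefl E"
  using undirected by (auto simp: undirected_graph_def graph_def)

lemma implication_class_closed: "e \<in> A \<Longrightarrow> (e, f) \<in> Gamma E \<Longrightarrow> f \<in> A"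
  using implication_class rtrancl_into_rtrancl by (fastforce simp: implication_class_def)

lemma implication_class_connected:
  assumes "e \<in> A" "f \<in> A"
  shows "(e, f) \<in> (Gamma E)\<^sup>*"
proof -
  obtain e0 where A: "A = (Gamma E)\<^sup>* `` {e0}"
    using implication_class by (auto simp: implication_class_def)
  have "(e, e0) \<in> (Gamma E)\<^sup>*"
    using assms(1) A sym_rtrancl[OF sym_Gamma[OF sym_edges]] by (auto dest: symD)
  then show ?thesis
    using assms(2) A by (auto intro: rtrancl_trans)
qed

lemma implication_class_subset: "A \<subseteq> E"
proof
  fix f assume "f \<in> A"
  obtain e0 where "e0 \<in> E" "A = (Gamma E)\<^sup>* `` {e0}"
    using implication_class by (auto simp: implication_class_def)
  with \<open>f \<in> A\<close> have "(e0, f) \<in> (Gamma E)\<^sup>*" "e0 \<in> E" by auto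
  then show "f \<in> E"
    by (induction rule: rtrancl_induct) (use Gamma_subset in blast)+
qed

lemma color_class_subset: "color_class A \<subseteq> E"
  using implication_class_subset sym_edges by (auto simp: color_class_def dest: symD)

lemma color_class_closed:
  assumes "(a, b) \<in> color_class A" "((a, b), (a', b')) \<in> Gamma E"
  shows "(a', b') \<in> color_class A"
  using assms implication_class_closed Gamma_swap[OF sym_edges]
  by (auto simp: color_class_def)

lemma color_class_invariant:
  assumes "e \<in> color_class A" "f \<in> color_class A" "P e"
    and swap: "\<And>a b. P (a, b) \<Longrightarrow> P (b, a)"
    and step: "\<And>u v v'. (u, v) \<in> color_class A \<Longrightarrow> ((u, v), (u, v')) \<in> Gamma E \<Longrightarrow>
                 P (u, v) \<Longrightarrow> P (u, v')"
  shows "P f"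
proof -
  have swap_iff: "P (a, b) \<longleftrightarrow> P (b, a)" for a b
    using swap by blast
  have Gamma_step: "P h" if "g \<in> color_class A" "(g, h) \<in> Gamma E" "P g" for g h
  proof -
    obtain u v u' v' where gh: "g = (u, v)" "h = (u', v')"
      by (cases g, cases h)
    from that(2) gh have "u = u' \<or> v = v'"
      by (auto simp: Gamma_def)
    then show ?thesis
    proof
      assume "u = u'"
      with that gh show ?thesis using step by blast
    next
      assume "v = v'"
      \<comment> \<open>the transposed step fixes the first coordinate\<close>
      moreover have "((v, u), (v', u')) \<in> Gamma E"
        using Gamma_swap[OF sym_edges] that(2) gh by blast
      moreover have "(v, u) \<in> color_class A"
        using that(1) gh by (simp add: color_class_swap)
      ultimately show ?thesis
        using step[of v u u'] that(3) gh swap_iff by simp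
    qed
  qed
  have representative: "\<exists>g\<in>A. P g \<longleftrightarrow> P h" if "h \<in> color_class A" for h
    using that swap_iff by (cases h) (auto simp: color_class_def)
  obtain e' where e': "e' \<in> A" "P e'"
    using representative[OF assms(1)] assms(3) by blast
  obtain f' where f': "f' \<in> A" "P f' \<Longrightarrow> P f"
    using representative[OF assms(2)] by blast
  have "(e', f') \<in> (Gamma E)\<^sup>*"
    using e'(1) f'(1) by (rule implication_class_connected)
  then have "f' \<in> A \<and> P f'"
    by (induction rule: rtrancl_induct)
      (use e' Gamma_step implication_class_closed in \<open>auto simp: color_class_def\<close>)
  then show ?thesis
    using f'(2) by blast
qed

lemma color_class_edge_inside_partitive:
  assumes "partitive V E X" "(p, q) \<in> color_class A" "p \<in> X" "q \<in> X"
  shows "spanned A \<subseteq> X"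
proof
  fix a assume "a \<in> spanned A"
  then obtain c where ac: "(a, c) \<in> color_class A"
    by (auto simp: spanned_def)
  have "fst (a, c) \<in> X \<and> snd (a, c) \<in> X"
  proof (rule color_class_invariant[OF assms(2) ac])
    fix u v v'
    assume uv: "(u, v) \<in> color_class A" "((u, v), (u, v')) \<in> Gamma E"
      and "fst (u, v) \<in> X \<and> snd (u, v) \<in> X"
    moreover have "v' \<in> V"
      using uv(2) Gamma_subset edges_subset by blast
    ultimately show "fst (u, v') \<in> X \<and> snd (u, v') \<in> X"
      using partitiveD(1)[OF assms(1), of u v v'] by (auto simp: Gamma_def)
  qed (use assms in auto)
  then show "a \<in> X" by simp
qed

lemma color_class_leaves_partitive:
  assumes "partitive V E X" "X \<subset> spanned A" "(p, q) \<in> color_class A" "p \<in> X"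
  shows "q \<notin> X"
  using color_class_edge_inside_partitive[OF assms(1,3,4)] assms(2,4) by blast

lemma color_class_common_neighbour_of_partitive:
  assumes X: "partitive V E X"
    and uv: "(u, v) \<in> color_class A" "((u, v), (u, v')) \<in> Gamma E"
    and "u \<notin> X" "v \<notin> X" "v' \<in> X" "x \<in> X"
  shows "(u, x) \<in> color_class A"
proof -
  have E: "(u, v) \<in> E" "(u, v') \<in> E" "(v, v') \<notin> E"
    using uv(2) \<open>v \<notin> X\<close> \<open>v' \<in> X\<close> by (auto simp: Gamma_def)
  then have V: "u \<in> V" "v \<in> V"
    using edges_subset by auto
  have "(u, x) \<in> E"
    using partitiveD(2)[OF X \<open>v' \<in> X\<close> \<open>x \<in> X\<close>, of u] \<open>u \<notin> X\<close> V E(2) by simp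
  moreover have "(v, x) \<notin> E"
    using partitiveD(2)[OF X \<open>v' \<in> X\<close> \<open>x \<in> X\<close>, of v] \<open>v \<notin> X\<close> V E(3)
      sym_edges by (auto dest: symD)
  ultimately have "((u, v), (u, x)) \<in> Gamma E"
    using E(1) by (auto simp: Gamma_def)
  then show ?thesis
    by (rule color_class_closed[OF uv(1)])
qed

lemma partitive_joined_to_outside_neighbour:
  assumes X: "partitive V E X" "X \<subset> spanned A"
    and b: "x0 \<in> X" "(x0, b) \<in> color_class A"
    and no_witness: "\<And>w. w \<notin> X \<Longrightarrow> \<exists>x\<in>X. (w, x) \<notin> color_class A"
    and "x \<in> X"
  shows "(x, b) \<in> color_class A"
proof -
  have b_V: "b \<in> V - X"
    using color_class_leaves_partitive[OF X b(2,1)] b(2) color_class_subset edges_subset by blast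
  have X_b: "(y, b) \<in> E" if "y \<in> X" for y
    using partitiveD(1)[OF X(1) b(1) that b_V] b(2) color_class_subset by blast
  define P where "P f \<longleftrightarrow> (\<forall>y\<in>{fst f, snd f} \<inter> X. (y, b) \<in> color_class A)" for f
  obtain c where xc: "(x, c) \<in> color_class A"
    using \<open>x \<in> X\<close> X(2) by (auto simp: spanned_def)
  have "P (x, c)"
  proof (rule color_class_invariant[OF b(2) xc])
    fix u v v'
    assume uv: "(u, v) \<in> color_class A" "((u, v), (u, v')) \<in> Gamma E" and "P (u, v)"
    have "(v', b) \<in> color_class A" if "v' \<in> X"
    proof (cases "v \<in> X")
      case True
      then have "((v, b), (v', b)) \<in> Gamma E"
        using uv(2) X_b \<open>v' \<in> X\<close> irrefl_edges by (auto simp: Gamma_def irrefl_def)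
      then show ?thesis
        using \<open>P (u, v)\<close> True by (auto simp: P_def intro: color_class_closed)
    next
      case False
      have "u \<notin> X"
        using color_class_leaves_partitive[OF X color_class_swap[OF color_class_closed[OF uv]]]
          \<open>v' \<in> X\<close> by blast
      then obtain y where "y \<in> X" "(u, y) \<notin> color_class A"
        using no_witness by blast
      then show ?thesis
        using color_class_common_neighbour_of_partitive[OF X(1) uv \<open>u \<notin> X\<close> False \<open>v' \<in> X\<close>]
        by blast
    qed
    then show "P (u, v')"
      using \<open>P (u, v)\<close> by (auto simp: P_def)
  qed (use b b_V in \<open>auto simp: P_def\<close>)
  then show ?thesis
    using \<open>x \<in> X\<close> by (simp add: P_def)
qed

end

theorem proposition3p2:
  fixes V X :: "'a set" and E A :: "('a \<times> 'a) set"
  assumes "undirected_graph V E"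
    and "implication_class E A"
    and "partitive V E X"
    and "X \<subset> spanned A"
  shows "\<exists>a \<in> spanned A - X. \<forall>x\<in>X. (a, x) \<in> color_class A"
proof (cases "X = {}")
  case True
  then show ?thesis using assms(4) by auto
next
  case False
  interpret graph_implication_class V E A
    using assms(1,2) by unfold_locales
  obtain x0 where x0: "x0 \<in> X"
    using False by auto
  then obtain b where b: "(x0, b) \<in> color_class A"
    using assms(4) by (auto simp: spanned_def)
  have "b \<notin> X"
    using color_class_leaves_partitive[OF assms(3,4) b x0] .
  show ?thesis
  proof (cases "\<exists>w. w \<notin> X \<and> (\<forall>x\<in>X. (w, x) \<in> color_class A)")
    case True
    then show ?thesis
      using x0 unfolding spanned_def by blast
  next
    case False
    then have "(b, x) \<in> color_class A" if "x \<in> X" for x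
      using partitive_joined_to_outside_neighbour[OF assms(3,4) x0 b _ that]
      by (auto intro: color_class_swap)
    moreover have "b \<in> spanned A"
      using color_class_swap[OF b] unfolding spanned_def by blast
    ultimately show ?thesis
      using \<open>b \<notin> X\<close> by blast
  qed
qed

end
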